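(* Let $A\in M_N(\{0,1\})$ be primitive, with the notation of the context. Fix $\beta\in V_A\setminus\{\emptyset\}$ and a $\sigma$-invariant ergodic Borel probability measure $\tau$ on $\Omega_A$. For $n\in\mathbb N$ let $\pi_n:\Omega_A\to V_A^n$ be the map $x\mapsto x_1\cdots x_n$. Then for $\tau$-almost every $x\in C(\beta)$, $$\lim_{n\to\infty}\frac{\lambda^A_\beta(\pi_n(x))}{n}=\lambda_A\,\tau(F_A).$$ Moreover, there are constants $0<c_0\le c_1<1$, independent of $\tau$, such that $c_0\le\tau(F_A)\le c_1\lambda_A^{-1}$.
   Context: Let $A\in M_N(\{0,1\})$ be a primitive matrix. A word $x_1\cdots x_k$ over $\{1,\dots,N\}$ is admissible if $A_{x_n,x_{n+1}}=1$ for $1\le n\le k-1$; $V_A^k$ is the set of admissible words of length $k$ ($V_A^0=\{\emptyset\}$, $\emptyset$ the empty word), $V_A=\bigsqcup_k V_A^k$, $|\alpha|$ denotes length, and $\beta V_A$ denotes the set of admissible words beginning with $\beta$. $\Omega_A=\{x\in\{1,\dots,N\}^{\mathbb N}:A_{x_n,x_{n+1}}=1\ \forall n\}$ with the product topology and left shift $\sigma$; for $\alpha=\alpha_1\cdots\alpha_n$, $C(\alpha)=\{x\in\Omega_A:x_i=\alpha_i,\ i\le n\}$. Let $\lambda_A>1$ be the Perron–Frobenius eigenvalue of $A$ and $u$ the positive vector with $Au=\lambda_Au$, $\sum_iu_i=1$. Set $P_{i,j}=A_{i,j}u_j/(\lambda_Au_i)$ and $F_A:\Omega_A\to[0,1)$,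 $F_A(x)=u_{x_1}(1-P_{x_1,x_2})$. For $\beta\in V_A\setminus\{\emptyset\}$ and $\nu\in\beta V_A$ define $\lambda^A_\beta(\beta)=\lambda_Au_{\beta_{|\beta|}}$ and, for $\nu\ne\beta$, $$\lambda^A_\beta(\nu)=\lambda_Au_{\nu_{|\nu|}}+\lambda_A\sum_{k=0}^{|\nu|-|\beta|-1}u_{\nu_{|\beta|+k}}\bigl(1-P_{\nu_{|\beta|+k},\nu_{|\beta|+k+1}}\bigr).$$ (These are the nonzero eigenvalues of the log-Laplacian on the cylinder $C(\beta)$.) *)

theory Defs
  imports "HOL-Probability.Probability"
begin

text \<open>Matrices are functions nat => nat => real, indexed by the alphabet {1..N}.
  Infinite sequences x = x_1 x_2 ... are functions nat => nat with x_1 = x 0.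
  Words are lists; the paper's 1-based letter nu_i is the list entry nu ! (i - 1).\<close>

fun mpow :: "nat \<Rightarrow> (nat \<Rightarrow> nat \<Rightarrow> real) \<Rightarrow> nat \<Rightarrow> nat \<Rightarrow> nat \<Rightarrow> real" where
  "mpow N A 0 i j = (if i = j then 1 else 0)"
| "mpow N A (Suc k) i j = (\<Sum>l\<in>{1..N}. mpow N A k i l * A l j)"

definition zero_one_matrix :: "nat \<Rightarrow> (nat \<Rightarrow> nat \<Rightarrow> real) \<Rightarrow> bool" where
  "zero_one_matrix N A \<longleftrightarrow> (\<forall>i\<in>{1..N}. \<forall>j\<in>{1..N}. A i j \<in> {0, 1})"

definition primitive :: "nat \<Rightarrow> (nat \<Rightarrow> nat \<Rightarrow> real) \<Rightarrow> bool" where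
  "primitive N A \<longleftrightarrow> (\<forall>i\<in>{1..N}. \<forall>j\<in>{1..N}. A i j \<ge> 0) \<and>
     (\<exists>k\<ge>1. \<forall>i\<in>{1..N}. \<forall>j\<in>{1..N}. mpow N A k i j > 0)"

definition is_eigenvalue :: "nat \<Rightarrow> (nat \<Rightarrow> nat \<Rightarrow> real) \<Rightarrow> complex \<Rightarrow> bool" where
  "is_eigenvalue N A \<mu> \<longleftrightarrow> (\<exists>v :: nat \<Rightarrow> complex. (\<exists>i\<in>{1..N}. v i \<noteq> 0) \<and>
     (\<forall>i\<in>{1..N}. (\<Sum>j\<in>{1..N}. of_real (A i j) * v j) = \<mu> * v i))"

definition PF_data :: "nat \<Rightarrow> (nat \<Rightarrow> nat \<Rightarrow> real) \<Rightarrow> real \<Rightarrow> (nat \<Rightarrow> real) \<Rightarrow> bool" where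
  "PF_data N A lam u \<longleftrightarrow>
     is_eigenvalue N A (of_real lam) \<and> (\<forall>\<mu>. is_eigenvalue N A \<mu> \<longrightarrow> cmod \<mu> \<le> lam) \<and>
     (\<forall>i\<in>{1..N}. u i > 0) \<and> (\<Sum>i\<in>{1..N}. u i) = 1 \<and>
     (\<forall>i\<in>{1..N}. (\<Sum>j\<in>{1..N}. A i j * u j) = lam * u i)"

definition admissible :: "nat \<Rightarrow> (nat \<Rightarrow> nat \<Rightarrow> real) \<Rightarrow> nat list \<Rightarrow> bool" where
  "admissible N A w \<longleftrightarrow> set w \<subseteq> {1..N} \<and>
     (\<forall>n. Suc n < length w \<longrightarrow> A (w ! n) (w ! Suc n) = 1)"

definition Omega :: "nat \<Rightarrow> (nat \<Rightarrow> nat \<Rightarrow> real) \<Rightarrow> (nat \<Rightarrow> nat) set" where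
  "Omega N A = {x. (\<forall>n. x n \<in> {1..N}) \<and> (\<forall>n. A (x n) (x (Suc n)) = 1)}"

definition shift :: "(nat \<Rightarrow> nat) \<Rightarrow> (nat \<Rightarrow> nat)" where
  "shift x = (\<lambda>n. x (Suc n))"

definition cyl :: "nat \<Rightarrow> (nat \<Rightarrow> nat \<Rightarrow> real) \<Rightarrow> nat list \<Rightarrow> (nat \<Rightarrow> nat) set" where
  "cyl N A \<alpha> = {x \<in> Omega N A. \<forall>i<length \<alpha>. x i = \<alpha> ! i}"

definition proj :: "nat \<Rightarrow> (nat \<Rightarrow> nat) \<Rightarrow> nat list" where
  "proj n x = map x [0..<n]"

definition Pmat :: "(nat \<Rightarrow> nat \<Rightarrow> real) \<Rightarrow> real \<Rightarrow> (nat \<Rightarrow> real) \<Rightarrow> nat \<Rightarrow> nat \<Rightarrow> real" where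
  "Pmat A lam u i j = A i j * u j / (lam * u i)"

definition F_A :: "(nat \<Rightarrow> nat \<Rightarrow> real) \<Rightarrow> real \<Rightarrow> (nat \<Rightarrow> real) \<Rightarrow> (nat \<Rightarrow> nat) \<Rightarrow> real" where
  "F_A A lam u x = u (x 0) * (1 - Pmat A lam u (x 0) (x 1))"

text \<open>lambda^A_beta(nu) for nu in beta V_A.  In the paper nu_{|beta|+k} (1-based) is
  nu ! (|beta| + k - 1) here; for nu = beta the sum is empty.\<close>
definition lam_beta ::
  "(nat \<Rightarrow> nat \<Rightarrow> real) \<Rightarrow> real \<Rightarrow> (nat \<Rightarrow> real) \<Rightarrow> nat list \<Rightarrow> nat list \<Rightarrow> real" where
  "lam_beta A lam u \<beta> \<nu> =
     (if \<nu> = \<beta> then lam * u (last \<beta>)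
      else lam * u (last \<nu>) + lam * (\<Sum>k<length \<nu> - length \<beta>.
        u (\<nu> ! (length \<beta> + k - 1)) *
          (1 - Pmat A lam u (\<nu> ! (length \<beta> + k - 1)) (\<nu> ! (length \<beta> + k)))))"

text \<open>Borel probability measures on Omega_A (product topology; nat is discrete).\<close>
definition borel_prob_on_Omega :: "nat \<Rightarrow> (nat \<Rightarrow> nat \<Rightarrow> real) \<Rightarrow> (nat \<Rightarrow> nat) measure \<Rightarrow> bool" where
  "borel_prob_on_Omega N A \<tau> \<longleftrightarrow> prob_space \<tau> \<and>
     sets \<tau> = sets (restrict_space borel (Omega N A))"

definition shift_invariant :: "(nat \<Rightarrow> nat) measure \<Rightarrow> bool" where
  "shift_invariant \<tau> \<longleftrightarrow> shift \<in> measurable \<tau> \<tau> \<and>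
     (\<forall>B\<in>sets \<tau>. emeasure \<tau> (shift -` B \<inter> space \<tau>) = emeasure \<tau> B)"

definition shift_ergodic :: "(nat \<Rightarrow> nat) measure \<Rightarrow> bool" where
  "shift_ergodic \<tau> \<longleftrightarrow> (\<forall>B\<in>sets \<tau>. shift -` B \<inter> space \<tau> = B \<longrightarrow>
     measure \<tau> B = 0 \<or> measure \<tau> B = 1)"

definition inv_ergodic_borel :: "nat \<Rightarrow> (nat \<Rightarrow> nat \<Rightarrow> real) \<Rightarrow> (nat \<Rightarrow> nat) measure \<Rightarrow> bool" where
  "inv_ergodic_borel N A \<tau> \<longleftrightarrow>
     borel_prob_on_Omega N A \<tau> \<and> shift_invariant \<tau> \<and> shift_ergodic \<tau>"

end

theory Submission
  imports Defs
begin

text \<open>On \<open>\<Omega>\<^sub>A\<close> the eigenvector equation \<open>A u = \<lambda> u\<close> turns \<open>F\<^sub>A\<close> into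
  \<open>u(x\<^sub>1) - u(x\<^sub>2) / \<lambda>\<close>, and \<open>\<lambda>\<^sup>A\<^sub>\<beta>(\<pi>\<^sub>n x)\<close> is \<open>\<lambda>\<close> times the Birkhoff sum of \<open>F\<^sub>A\<close> along the first
  \<open>n - 1\<close> shifts of \<open>x\<close>, minus a fixed initial segment, plus the bounded term \<open>\<lambda> u(x\<^sub>n)\<close>.
  Birkhoff's ergodic theorem, proved here for bounded observables by the stopping-time
  argument of Katznelson and Weiss, thus gives the almost sure limit \<open>\<lambda> \<tau>(F\<^sub>A)\<close>.
  Shift invariance of \<open>\<tau>\<close> gives \<open>\<tau>(F\<^sub>A) = (1 - 1/\<lambda>) \<tau>(u(x\<^sub>1))\<close>, and since each row of the
  0-1 matrix \<open>A\<close> picks a subfamily of the \<open>u\<^sub>j\<close>, \<open>0 < min u \<le> u\<^sub>i \<le> 1/\<lambda>\<close>; so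
  \<open>c\<^sub>1 = 1 - 1/\<lambda>\<close> and \<open>c\<^sub>0 = c\<^sub>1 min u\<close> work.\<close>

section \<open>Birkhoff's ergodic theorem for bounded observables\<close>

definition birkhoff_sum :: "('a \<Rightarrow> 'a) \<Rightarrow> ('a \<Rightarrow> real) \<Rightarrow> nat \<Rightarrow> 'a \<Rightarrow> real" where
  "birkhoff_sum T f n x = (\<Sum>k<n. f ((T ^^ k) x))"

definition upper_avg :: "('a \<Rightarrow> 'a) \<Rightarrow> ('a \<Rightarrow> real) \<Rightarrow> 'a \<Rightarrow> real" where
  "upper_avg T f x = real_of_ereal (limsup (\<lambda>n. ereal (birkhoff_sum T f n x / real n)))"

lemma birkhoff_sum_add:
  "birkhoff_sum T f (a + b) x = birkhoff_sum T f a x + birkhoff_sum T f b ((T ^^ a) x)"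
proof (induction b)
  case (Suc b)
  have "(T ^^ (a + b)) x = (T ^^ b) ((T ^^ a) x)"
    by (simp add: funpow_add add.commute[of a b])
  with Suc show ?case by (simp add: birkhoff_sum_def)
qed (simp add: birkhoff_sum_def)

lemma birkhoff_sum_Suc_left: "birkhoff_sum T f (Suc n) x = f x + birkhoff_sum T f n (T x)"
  using birkhoff_sum_add[of T f 1 n x] by (simp add: birkhoff_sum_def)

lemma birkhoff_sum_uminus: "birkhoff_sum T (\<lambda>y. - f y) n x = - birkhoff_sum T f n x"
  by (simp add: birkhoff_sum_def sum_negf)

locale mpt = prob_space M for M :: "'a measure" +
  fixes T :: "'a \<Rightarrow> 'a"
  assumes T_measurable [measurable]: "T \<in> measurable M M"
    and emeasure_vimage: "\<And>B. B \<in> sets M \<Longrightarrow> emeasure M (T -` B \<inter> space M) = emeasure M B"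
begin

lemma funpow_measurable [measurable]: "T ^^ k \<in> measurable M M"
  by (induction k) (simp_all add: measurable_comp[OF _ T_measurable, unfolded comp_def])

lemma funpow_in_space: "x \<in> space M \<Longrightarrow> (T ^^ k) x \<in> space M"
  using measurable_space[OF funpow_measurable] .

lemma distr_funpow: "distr M M (T ^^ k) = M"
proof (induction k)
  case 0
  show ?case by (simp add: distr_id[unfolded id_def])
next
  case (Suc k)
  have distr_T: "distr M M T = M"
    by (rule measure_eqI) (simp_all add: emeasure_distr emeasure_vimage)
  have "distr M M (T ^^ Suc k) = distr (distr M M (T ^^ k)) M T"
    by (simp add: distr_distr comp_def)
  also have "\<dots> = M"
    by (simp only: Suc.IH distr_T)
  finally show ?case .
qed

lemma integral_comp_funpow:
  fixes f :: "'a \<Rightarrow> real"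
  shows "f \<in> borel_measurable M \<Longrightarrow> (\<integral>x. f ((T ^^ k) x) \<partial>M) = integral\<^sup>L M f"
  using integral_distr[OF funpow_measurable, of f k] by (simp add: distr_funpow)

lemma integrable_comp_funpow:
  fixes f :: "'a \<Rightarrow> real"
  shows "integrable M f \<Longrightarrow> integrable M (\<lambda>x. f ((T ^^ k) x))"
  using integrable_distr_eq[OF funpow_measurable, of f k] by (simp add: distr_funpow)

lemma borel_measurable_birkhoff_sum [measurable]:
  "f \<in> borel_measurable M \<Longrightarrow> birkhoff_sum T f n \<in> borel_measurable M"
proof -
  assume "f \<in> borel_measurable M"
  then have "(\<lambda>x. f ((T ^^ k) x)) \<in> borel_measurable M" for k
    using measurable_comp[OF funpow_measurable] by (simp add: comp_def)
  then show ?thesis unfolding birkhoff_sum_def by (simp add: borel_measurable_sum)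
qed

lemma integrable_birkhoff_sum: "integrable M f \<Longrightarrow> integrable M (birkhoff_sum T f n)"
  by (simp add: birkhoff_sum_def[abs_def] integrable_comp_funpow)

lemma integral_birkhoff_sum:
  "integrable M f \<Longrightarrow> integral\<^sup>L M (birkhoff_sum T f n) = real n * integral\<^sup>L M f"
  by (simp add: birkhoff_sum_def[abs_def] integrable_comp_funpow integral_comp_funpow)

lemma invariant_funpow:
  "(\<And>x. x \<in> space M \<Longrightarrow> g (T x) = g x) \<Longrightarrow> x \<in> space M \<Longrightarrow> g ((T ^^ k) x) = g x"
  by (induction k) (simp_all add: funpow_in_space)

lemma bound_nonneg:
  fixes f :: "'a \<Rightarrow> real"
  assumes "\<forall>y\<in>space M. \<bar>f y\<bar> \<le> K"
  shows "0 \<le> K"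
proof -
  obtain y where "y \<in> space M" using not_empty by blast
  with assms have "\<bar>f y\<bar> \<le> K" by blast
  then show ?thesis using abs_ge_zero[of "f y"] by linarith
qed

lemma abs_birkhoff_avg_le:
  assumes "\<forall>y\<in>space M. \<bar>f y\<bar> \<le> K" and "x \<in> space M"
  shows "\<bar>birkhoff_sum T f n x / real n\<bar> \<le> K"
proof (cases "n = 0")
  case True
  then show ?thesis using bound_nonneg[OF assms(1)] by simp
next
  case False
  have "\<bar>birkhoff_sum T f n x\<bar> \<le> (\<Sum>k<n. \<bar>f ((T ^^ k) x)\<bar>)"
    unfolding birkhoff_sum_def by (rule sum_abs)
  also have "\<dots> \<le> (\<Sum>k<n. K)"
    using assms funpow_in_space by (intro sum_mono) auto
  finally have "\<bar>birkhoff_sum T f n x\<bar> \<le> real n * K" by simp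
  then show ?thesis using False by (simp add: abs_divide pos_divide_le_eq mult.commute)
qed

lemma limsup_birkhoff_avg_bounds:
  assumes "\<forall>y\<in>space M. \<bar>f y\<bar> \<le> K" and "x \<in> space M"
  shows "limsup (\<lambda>n. ereal (birkhoff_sum T f n x / real n)) \<le> ereal K"
    and "ereal (- K) \<le> limsup (\<lambda>n. ereal (birkhoff_sum T f n x / real n))"
proof -
  have le: "- K \<le> birkhoff_sum T f n x / real n" "birkhoff_sum T f n x / real n \<le> K" for n
    using abs_birkhoff_avg_le[OF assms, where n = n] by linarith+
  show "limsup (\<lambda>n. ereal (birkhoff_sum T f n x / real n)) \<le> ereal K"
    by (rule Limsup_bounded) (simp add: le)
  have "ereal (- K) \<le> liminf (\<lambda>n. ereal (birkhoff_sum T f n x / real n))"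
    by (rule Liminf_bounded) (simp add: le)
  also have "\<dots> \<le> limsup (\<lambda>n. ereal (birkhoff_sum T f n x / real n))"
    by (rule Liminf_le_Limsup) simp
  finally show "ereal (- K) \<le> limsup (\<lambda>n. ereal (birkhoff_sum T f n x / real n))" .
qed

lemma upper_avg_eq_limsup:
  assumes "\<forall>y\<in>space M. \<bar>f y\<bar> \<le> K" and "x \<in> space M"
  shows "ereal (upper_avg T f x) = limsup (\<lambda>n. ereal (birkhoff_sum T f n x / real n))"
  using limsup_birkhoff_avg_bounds[OF assms] unfolding upper_avg_def
  by (cases "limsup (\<lambda>n. ereal (birkhoff_sum T f n x / real n))") auto

lemma abs_upper_avg_le:
  assumes "\<forall>y\<in>space M. \<bar>f y\<bar> \<le> K" and "x \<in> space M"
  shows "\<bar>upper_avg T f x\<bar> \<le> K"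
  using limsup_birkhoff_avg_bounds[OF assms] upper_avg_eq_limsup[OF assms, symmetric]
  by (simp add: abs_le_iff)

lemma borel_measurable_upper_avg [measurable]:
  "f \<in> borel_measurable M \<Longrightarrow> upper_avg T f \<in> borel_measurable M"
  unfolding upper_avg_def
  by (intro borel_measurable_real_of_ereal borel_measurable_limsup borel_measurable_ereal
      borel_measurable_divide borel_measurable_birkhoff_sum) simp_all

lemma upper_avg_exceeds:
  assumes "\<forall>y\<in>space M. \<bar>f y\<bar> \<le> K" and "x \<in> space M"
    and "t < upper_avg T f x"
  shows "\<exists>n\<ge>1. t < birkhoff_sum T f n x / real n"
proof (rule ccontr)
  assume "\<not> ?thesis"
  then have "\<forall>\<^sub>F n in sequentially. ereal (birkhoff_sum T f n x / real n) \<le> ereal t"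
    by (auto simp: eventually_sequentially intro!: exI[of _ 1])
  then have "limsup (\<lambda>n. ereal (birkhoff_sum T f n x / real n)) \<le> ereal t"
    by (rule Limsup_bounded)
  then show False using assms(3) upper_avg_eq_limsup[OF assms(1,2), symmetric] by simp
qed

lemma upper_avg_comp_T:
  assumes bounded: "\<forall>y\<in>space M. \<bar>f y\<bar> \<le> K" and x: "x \<in> space M"
  shows "upper_avg T f (T x) = upper_avg T f x"
proof -
  define a where "a n = birkhoff_sum T f (Suc n) x / real (Suc n)" for n
  define d where "d n = birkhoff_sum T f n (T x) / real n - a n" for n
  have d_eq: "d n = (a n - f x) / real n" if "1 \<le> n" for n
    using that by (simp add: d_def a_def birkhoff_sum_Suc_left field_simps)
  have "\<bar>a n - f x\<bar> \<le> 2 * K" for n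
  proof -
    have "\<bar>a n\<bar> \<le> K" "\<bar>f x\<bar> \<le> K"
      using abs_birkhoff_avg_le[OF bounded x, where n = "Suc n"] bounded x by (simp_all add: a_def)
    then show ?thesis using abs_triangle_ineq4[of "a n" "f x"] by linarith
  qed
  then have "norm (d n) \<le> 2 * K / real n" if "1 \<le> n" for n
    using that by (simp add: d_eq abs_divide divide_right_mono)
  then have "\<forall>\<^sub>F n in sequentially. norm (d n) \<le> 2 * K / real n"
    unfolding eventually_sequentially by blast
  then have "d \<longlonglongrightarrow> 0"
    by (rule Lim_null_comparison) (rule lim_const_over_n)
  then have d_lim: "(\<lambda>n. ereal (d n)) \<longlonglongrightarrow> 0"
    by (simp add: zero_ereal_def tendsto_ereal)
  have "limsup (\<lambda>n. ereal (birkhoff_sum T f n (T x) / real n))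
      = limsup (\<lambda>n. ereal (d n) + ereal (a n))"
    by (simp add: d_def)
  also have "\<dots> = limsup (\<lambda>n. ereal (a n))"
    using ereal_limsup_lim_add[OF d_lim, of "\<lambda>n. ereal (a n)"] by simp
  also have "\<dots> = limsup (\<lambda>n. ereal (birkhoff_sum T f n x / real n))"
    using limsup_shift[of "\<lambda>n. ereal (birkhoff_sum T f n x / real n)"] by (simp add: a_def)
  finally show ?thesis
    unfolding upper_avg_def by (rule arg_cong[where f = real_of_ereal])
qed

text \<open>Cut the orbit greedily into stopping blocks, each of which has Birkhoff sum at least
  its length times \<open>g\<close>; only a final block shorter than \<open>m\<close> costs at most \<open>c\<close> per step.\<close>

lemma birkhoff_sum_ge_of_stopping:
  assumes g_inv: "\<And>x. x \<in> space M \<Longrightarrow> g (T x) = g x"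
    and h_ge: "\<And>x. x \<in> space M \<Longrightarrow> g x - c \<le> h x" and "0 \<le> c"
    and stop: "\<And>x. x \<in> space M \<Longrightarrow> \<exists>n\<in>{1..m}. real n * g x \<le> birkhoff_sum T h n x"
    and "x \<in> space M"
  shows "real L * g x - real m * c \<le> birkhoff_sum T h L x"
  using \<open>x \<in> space M\<close>
proof (induction L arbitrary: x rule: less_induct)
  case (less L)
  show ?case
  proof (cases "L \<le> m")
    case True
    have "(\<Sum>k<L. g x - c) \<le> birkhoff_sum T h L x"
      unfolding birkhoff_sum_def
      using h_ge[OF funpow_in_space] invariant_funpow[where g = g, OF g_inv] less.prems
      by (intro sum_mono) metis
    moreover have "real L * c \<le> real m * c"
      using True \<open>0 \<le> c\<close> by (intro mult_right_mono) auto
    ultimately show ?thesis by (simp add: algebra_simps)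
  next
    case False
    obtain n where n: "n \<in> {1..m}" "real n * g x \<le> birkhoff_sum T h n x"
      using stop[OF less.prems] by blast
    have "real (L - n) * g ((T ^^ n) x) - real m * c \<le> birkhoff_sum T h (L - n) ((T ^^ n) x)"
      using n False less.prems by (intro less.IH funpow_in_space) auto
    moreover have "birkhoff_sum T h L x = birkhoff_sum T h n x + birkhoff_sum T h (L - n) ((T ^^ n) x)"
      using birkhoff_sum_add[of T h n "L - n" x] n False by simp
    ultimately show ?thesis
      using n False invariant_funpow[where g = g, OF g_inv less.prems, of n]
      by (simp add: algebra_simps of_nat_diff)
  qed
qed

lemma integral_le_of_stopping:
  assumes "integrable M g" "integrable M h"
    and g_inv: "\<And>x. x \<in> space M \<Longrightarrow> g (T x) = g x"
    and h_ge: "\<And>x. x \<in> space M \<Longrightarrow> g x - c \<le> h x" and "0 \<le> c"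
    and stop: "\<And>x. x \<in> space M \<Longrightarrow> \<exists>n\<in>{1..m}. real n * g x \<le> birkhoff_sum T h n x"
  shows "integral\<^sup>L M g \<le> integral\<^sup>L M h"
proof (rule ccontr)
  have bound: "real L * integral\<^sup>L M g - real m * c \<le> real L * integral\<^sup>L M h" for L
  proof -
    have "(\<integral>x. real L * g x - real m * c \<partial>M) \<le> integral\<^sup>L M (birkhoff_sum T h L)"
      using assms birkhoff_sum_ge_of_stopping[OF g_inv h_ge \<open>0 \<le> c\<close> stop]
      by (intro integral_mono integrable_birkhoff_sum) auto
    then show ?thesis
      using assms by (simp add: integral_birkhoff_sum prob_space)
  qed
  assume "\<not> ?thesis"
  then have "0 < integral\<^sup>L M g - integral\<^sup>L M h" by simp
  moreover obtain L :: nat where "real m * c / (integral\<^sup>L M g - integral\<^sup>L M h) < real L"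
    using reals_Archimedean2 by blast
  ultimately show False
    using bound[of L] by (simp add: divide_less_eq right_diff_distrib)
qed

lemma integral_le_integral_plus_exceptional:
  assumes f: "f \<in> borel_measurable M" "\<forall>y\<in>space M. \<bar>f y\<bar> \<le> K"
    and g: "integrable M g" "\<And>x. x \<in> space M \<Longrightarrow> g (T x) = g x"
      "\<And>x. x \<in> space M \<Longrightarrow> g x \<le> K"
    and "1 \<le> m"
  defines "E \<equiv> {x \<in> space M. \<forall>n\<in>{1..m}. birkhoff_sum T f n x \<le> real n * g x}"
  shows "integral\<^sup>L M g \<le> integral\<^sup>L M f + 2 * K * measure M E"
proof -
  have [measurable]: "g \<in> borel_measurable M" using g(1) by (rule borel_measurable_integrable)
  have E_sets [measurable]: "E \<in> sets M"
    using f(1) unfolding E_def by measurable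
  have "0 \<le> K" using bound_nonneg[OF f(2)] .
  \<comment> \<open>On \<open>E\<close> the stopping rule falls back to \<open>n = 1\<close>, paid for by adding \<open>2 K\<close> there.\<close>
  define h where "h x = f x + 2 * K * indicator E x" for x
  have int_f: "integrable M f"
    using f by (intro integrable_const_bound[where B = K]) auto
  have int_h: "integrable M h"
    unfolding h_def using int_f E_sets
    by (intro Bochner_Integration.integrable_add integrable_mult_right integrable_real_indicator)
      (auto simp: less_top[symmetric])
  have f_le_h: "f x \<le> h x" for x
    using \<open>0 \<le> K\<close> by (simp add: h_def indicator_def)
  have "integral\<^sup>L M g \<le> integral\<^sup>L M h"
  proof (rule integral_le_of_stopping[OF g(1) int_h g(2) _ _])
    show "g x - 2 * K \<le> h x" if "x \<in> space M" for x
    proof -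
      have "- K \<le> f x" using f(2) that by (auto simp: abs_le_iff)
      with g(3)[OF that] f_le_h[of x] show ?thesis by linarith
    qed
    show "\<exists>n\<in>{1..m}. real n * g x \<le> birkhoff_sum T h n x" if x: "x \<in> space M" for x
    proof (cases "x \<in> E")
      case True
      have "- K \<le> f x" using f(2) x by (auto simp: abs_le_iff)
      with True g(3)[OF x] have "real 1 * g x \<le> birkhoff_sum T h 1 x"
        by (simp add: birkhoff_sum_def h_def)
      then show ?thesis using \<open>1 \<le> m\<close> by (intro bexI[of _ 1]) auto
    next
      case False
      then obtain n where "n \<in> {1..m}" "real n * g x < birkhoff_sum T f n x"
        using x by (auto simp: E_def not_le)
      moreover have "birkhoff_sum T f n x \<le> birkhoff_sum T h n x"
        unfolding birkhoff_sum_def by (intro sum_mono f_le_h)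
      ultimately show ?thesis by force
    qed
    show "0 \<le> 2 * K" using \<open>0 \<le> K\<close> by simp
  qed
  also have "integral\<^sup>L M h = integral\<^sup>L M f + 2 * K * measure M E"
    unfolding h_def using int_h[unfolded h_def] int_f E_sets by (simp add: less_top[symmetric])
  finally show ?thesis .
qed

lemma integral_upper_avg_le:
  assumes f: "f \<in> borel_measurable M" "\<forall>y\<in>space M. \<bar>f y\<bar> \<le> K"
  shows "integral\<^sup>L M (upper_avg T f) \<le> integral\<^sup>L M f"
proof (rule field_le_epsilon)
  fix \<epsilon> :: real
  assume "0 < \<epsilon>"
  define g where "g x = upper_avg T f x - \<epsilon>" for x
  define E where "E m = {x \<in> space M. \<forall>n\<in>{1..m}. birkhoff_sum T f n x \<le> real n * g x}" for m
  have int_avg: "integrable M (upper_avg T f)"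
    using f abs_upper_avg_le[OF f(2)] by (intro integrable_const_bound[where B = K]) auto
  have int_g: "integrable M g"
    unfolding g_def[abs_def] using int_avg by simp
  have E_sets: "E m \<in> sets M" for m
    using f(1) int_g unfolding E_def g_def[abs_def] by measurable
  have "integral\<^sup>L M g \<le> integral\<^sup>L M f + 2 * K * measure M (E m)" if "1 \<le> m" for m
    unfolding E_def
  proof (rule integral_le_integral_plus_exceptional[OF f int_g _ _ that])
    show "g (T x) = g x" if "x \<in> space M" for x
      using upper_avg_comp_T[OF f(2) that] by (simp add: g_def)
    show "g x \<le> K" if "x \<in> space M" for x
      using abs_upper_avg_le[OF f(2) that] \<open>0 < \<epsilon>\<close> by (simp add: g_def abs_le_iff)
  qed
  moreover have "(\<lambda>m. measure M (E m)) \<longlonglongrightarrow> 0"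
  proof -
    have "decseq E" unfolding decseq_Suc_iff E_def by auto
    moreover have "(\<Inter>m. E m) = {}"
    proof (rule ccontr)
      assume "(\<Inter>m. E m) \<noteq> {}"
      then obtain x where x: "\<And>m. x \<in> E m" by blast
      then have "x \<in> space M" by (auto simp: E_def)
      moreover have "g x < upper_avg T f x" using \<open>0 < \<epsilon>\<close> by (simp add: g_def)
      ultimately obtain n where n: "1 \<le> n" "g x < birkhoff_sum T f n x / real n"
        using upper_avg_exceeds[OF f(2)] by blast
      then have "real n * g x < birkhoff_sum T f n x"
        by (simp add: pos_less_divide_eq mult.commute)
      moreover have "birkhoff_sum T f n x \<le> real n * g x"
        using x[of n] n(1) by (auto simp: E_def)
      ultimately show False by simp
    qed
    ultimately show ?thesis using E_sets finite_Lim_measure_decseq[of E] by auto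
  qed
  ultimately have "integral\<^sup>L M g \<le> integral\<^sup>L M f"
    by (intro LIMSEQ_le_const[where X = "\<lambda>m. integral\<^sup>L M f + 2 * K * measure M (E m)"])
      (auto intro!: tendsto_eq_intros)
  then show "integral\<^sup>L M (upper_avg T f) \<le> integral\<^sup>L M f + \<epsilon>"
    using int_avg by (simp add: g_def[abs_def] prob_space)
qed

end

locale ergodic_mpt = mpt +
  assumes measure_invariant_0_1:
    "\<And>B. B \<in> sets M \<Longrightarrow> T -` B \<inter> space M = B \<Longrightarrow> measure M B = 0 \<or> measure M B = 1"
begin

lemma AE_le_integral_of_invariant:
  fixes g :: "'a \<Rightarrow> real"
  assumes int_g: "integrable M g" and g_inv: "\<And>x. x \<in> space M \<Longrightarrow> g (T x) = g x"
  shows "AE x in M. g x \<le> integral\<^sup>L M g"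
proof -
  define B where "B = {x \<in> space M. integral\<^sup>L M g < g x}"
  have B_sets: "B \<in> sets M"
    using borel_measurable_integrable[OF int_g] unfolding B_def by measurable
  have "measure M B \<noteq> 1"
  proof
    assume "measure M B = 1"
    then have "AE x in M. x \<in> B" by (rule AE_prob_1)
    then have "integral\<^sup>L M (\<lambda>_. integral\<^sup>L M g) < integral\<^sup>L M g"
      using int_g by (intro integral_less_AE_space) (auto simp: B_def emeasure_space_1)
    then show False by (simp add: prob_space)
  qed
  moreover have "T -` B \<inter> space M = B"
    using g_inv measurable_space[OF T_measurable] by (auto simp: B_def)
  ultimately have "B \<in> null_sets M"
    using measure_invariant_0_1[OF B_sets] B_sets by (auto simp: null_sets_def emeasure_eq_measure)
  then show ?thesis
    by (rule AE_I') (auto simp: B_def not_less)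
qed

lemma AE_limsup_birkhoff_avg_le:
  assumes f: "f \<in> borel_measurable M" "\<forall>y\<in>space M. \<bar>f y\<bar> \<le> K"
  shows "AE x in M. limsup (\<lambda>n. ereal (birkhoff_sum T f n x / real n)) \<le> ereal (integral\<^sup>L M f)"
proof -
  have "AE x in M. upper_avg T f x \<le> integral\<^sup>L M (upper_avg T f)"
    using f abs_upper_avg_le[OF f(2)] upper_avg_comp_T[OF f(2)]
    by (intro AE_le_integral_of_invariant integrable_const_bound[where B = K]) auto
  with AE_space show ?thesis
  proof eventually_elim
    case (elim x)
    then show ?case
      using integral_upper_avg_le[OF f] upper_avg_eq_limsup[OF f(2) elim(1), symmetric] by simp
  qed
qed

theorem birkhoff_ergodic:
  assumes f: "f \<in> borel_measurable M" "\<forall>y\<in>space M. \<bar>f y\<bar> \<le> K"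
  shows "AE x in M. (\<lambda>n. birkhoff_sum T f n x / real n) \<longlonglongrightarrow> integral\<^sup>L M f"
proof -
  have neg_f: "(\<lambda>y. - f y) \<in> borel_measurable M" "\<forall>y\<in>space M. \<bar>- f y\<bar> \<le> K"
    using f by auto
  show ?thesis
    using AE_limsup_birkhoff_avg_le[OF f] AE_limsup_birkhoff_avg_le[OF neg_f]
  proof eventually_elim
    case (elim x)
    have "- liminf (\<lambda>n. ereal (birkhoff_sum T f n x / real n))
        = limsup (\<lambda>n. ereal (birkhoff_sum T (\<lambda>y. - f y) n x / real n))"
      using ereal_Limsup_uminus[of sequentially "\<lambda>n. ereal (birkhoff_sum T f n x / real n)"]
      by (simp add: birkhoff_sum_uminus)
    also have "\<dots> \<le> - ereal (integral\<^sup>L M f)"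
      using elim(2) by simp
    finally have "ereal (integral\<^sup>L M f) \<le> liminf (\<lambda>n. ereal (birkhoff_sum T f n x / real n))"
      by (simp add: ereal_uminus_le_reorder)
    with elim(1) show ?case by (rule limsup_le_liminf_real)
  qed
qed

end

section \<open>The shift on \<open>\<Omega>\<^sub>A\<close>\<close>

lemma inv_ergodic_borel_ergodic_mpt:
  "inv_ergodic_borel N A \<tau> \<Longrightarrow> ergodic_mpt \<tau> shift"
  unfolding inv_ergodic_borel_def borel_prob_on_Omega_def shift_invariant_def shift_ergodic_def
    ergodic_mpt_def ergodic_mpt_axioms_def mpt_def mpt_axioms_def
  by blast

lemma sets_inv_ergodic_borel:
  "inv_ergodic_borel N A \<tau> \<Longrightarrow> sets \<tau> = sets (restrict_space borel (Omega N A))"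
  by (simp add: inv_ergodic_borel_def borel_prob_on_Omega_def)

lemma space_inv_ergodic_borel: "inv_ergodic_borel N A \<tau> \<Longrightarrow> space \<tau> = Omega N A"
  using sets_eq_imp_space_eq[OF sets_inv_ergodic_borel] by (simp add: space_restrict_space)

lemma borel_measurable_two_coordinates:
  fixes G :: "nat \<Rightarrow> nat \<Rightarrow> real"
  assumes "sets M = sets (restrict_space borel S)"
  shows "(\<lambda>x :: nat \<Rightarrow> nat. G (x 0) (x 1)) \<in> borel_measurable M"
proof -
  have coord: "(\<lambda>x :: nat \<Rightarrow> nat. x i) \<in> measurable borel (count_space UNIV)" for i
  proof -
    have "(\<lambda>x :: nat \<Rightarrow> nat. x i) \<in> measurable borel borel"
      by (rule measurable_product_coordinates)
    then show ?thesis
      by (simp only: measurable_cong_sets[OF refl sets_borel_eq_count_space])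
  qed
  have "(\<lambda>x :: nat \<Rightarrow> nat. G j (x 1)) \<in> borel_measurable borel" for j
    using measurable_compose[OF coord[of 1], of "G j"] by simp
  then have "(\<lambda>x :: nat \<Rightarrow> nat. G (x 0) (x 1)) \<in> borel_measurable borel"
    by (rule measurable_compose_countable'[OF _ coord]) simp
  then show ?thesis
    by (simp add: measurable_cong_sets[OF assms refl] measurable_restrict_space1)
qed

lemma funpow_shift_apply: "(shift ^^ j) x i = x (i + j)"
  by (induction j arbitrary: i) (simp_all add: shift_def)

lemma PF_mult_eigenvector_le_1:
  assumes "zero_one_matrix N A" "PF_data N A lam u" "i \<in> {1..N}"
  shows "lam * u i \<le> 1"
proof -
  have "lam * u i = (\<Sum>j\<in>{1..N}. A i j * u j)"
    using assms(2,3) by (simp add: PF_data_def)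
  also have "\<dots> \<le> (\<Sum>j\<in>{1..N}. u j)"
  proof (rule sum_mono)
    fix j assume "j \<in> {1..N}"
    with assms show "A i j * u j \<le> u j"
      unfolding zero_one_matrix_def PF_data_def by force
  qed
  also have "\<dots> = 1" using assms(2) by (simp add: PF_data_def)
  finally show ?thesis .
qed

lemma F_A_on_Omega:
  assumes "\<forall>i\<in>{1..N}. 0 < u i" "lam \<noteq> 0" "x \<in> Omega N A"
  shows "F_A A lam u x = u (x 0) - u (x 1) / lam"
proof -
  have "A (x 0) (x 1) = 1" "0 < u (x 0)" using assms by (auto simp: Omega_def)
  then show ?thesis using assms(2) by (simp add: F_A_def Pmat_def field_simps)
qed

lemma PF_eigenvector_bounds:
  assumes "zero_one_matrix N A" "PF_data N A lam u" "1 < lam" "i \<in> {1..N}"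
  shows "0 < u i" "u i \<le> 1 / lam" "u i \<le> 1"
proof -
  show "0 < u i" using assms(2,4) by (simp add: PF_data_def)
  show "u i \<le> 1 / lam"
    using PF_mult_eigenvector_le_1[OF assms(1,2,4)] \<open>1 < lam\<close> by (simp add: field_simps)
  also have "1 / lam \<le> 1" using \<open>1 < lam\<close> by simp
  finally show "u i \<le> 1" .
qed

lemma abs_F_A_le_1:
  assumes "zero_one_matrix N A" "PF_data N A lam u" "1 < lam" "x \<in> Omega N A"
  shows "\<bar>F_A A lam u x\<bar> \<le> 1"
proof -
  note u = PF_eigenvector_bounds[OF assms(1-3)]
  have x: "x 0 \<in> {1..N}" "x 1 \<in> {1..N}" using assms(4) by (auto simp: Omega_def)
  then have "0 \<le> u (x 0)" "u (x 0) \<le> 1" "0 \<le> u (x 1) / lam" "u (x 1) / lam \<le> 1"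
    using u[OF x(1)] u[OF x(2)] \<open>1 < lam\<close> by (simp_all add: divide_le_eq)
  moreover have "F_A A lam u x = u (x 0) - u (x 1) / lam"
    using u(1) \<open>1 < lam\<close> by (intro F_A_on_Omega[OF _ _ assms(4)]) auto
  ultimately show ?thesis by (simp only: abs_le_iff) linarith
qed

lemma lam_beta_proj:
  assumes "\<beta> \<noteq> []" "length \<beta> < n"
  shows "lam_beta A lam u \<beta> (proj n x) = lam * u (x (n - 1))
    + lam * (birkhoff_sum shift (F_A A lam u) (n - 1) x
             - birkhoff_sum shift (F_A A lam u) (length \<beta> - 1) x)"
proof -
  define b where "b = length \<beta>"
  have b: "1 \<le> b" "b < n" using assms by (auto simp: b_def Suc_le_eq)
  have "proj n x \<noteq> \<beta>" "last (proj n x) = x (n - 1)"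
    using assms by (auto simp: proj_def last_map)
  moreover have
    "(\<Sum>k<length (proj n x) - length \<beta>. u (proj n x ! (length \<beta> + k - 1)) *
        (1 - Pmat A lam u (proj n x ! (length \<beta> + k - 1)) (proj n x ! (length \<beta> + k))))
      = birkhoff_sum shift (F_A A lam u) (n - b) ((shift ^^ (b - 1)) x)"
    unfolding birkhoff_sum_def b_def[symmetric] using b
    by (intro sum.cong) (auto simp: proj_def F_A_def funpow_shift_apply nth_append add.commute)
  moreover have "birkhoff_sum shift (F_A A lam u) (n - 1) x
      = birkhoff_sum shift (F_A A lam u) (b - 1) x
        + birkhoff_sum shift (F_A A lam u) (n - b) ((shift ^^ (b - 1)) x)"
    using birkhoff_sum_add[of shift "F_A A lam u" "b - 1" "n - b" x] b by simp
  ultimately show ?thesis by (simp add: lam_beta_def b_def)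
qed

lemma tendsto_lam_beta_proj:
  assumes "\<beta> \<noteq> []"
    and lim: "(\<lambda>n. birkhoff_sum shift (F_A A lam u) n x / real n) \<longlonglongrightarrow> c"
    and bounded: "\<And>i. \<bar>u (x i)\<bar> \<le> B"
  shows "(\<lambda>n. lam_beta A lam u \<beta> (proj n x) / real n) \<longlonglongrightarrow> lam * c"
proof -
  define S where "S n = birkhoff_sum shift (F_A A lam u) n x" for n
  have "(\<lambda>n. u (x (n - 1)) / real n) \<longlonglongrightarrow> 0"
  proof (rule Lim_null_comparison)
    show "\<forall>\<^sub>F n in sequentially. norm (u (x (n - 1)) / real n) \<le> B / real n"
      using bounded by (auto simp: abs_divide divide_right_mono)
  qed (rule lim_const_over_n)
  moreover have "(\<lambda>n. S (n - 1) / real n) \<longlonglongrightarrow> c"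
  proof (rule LIMSEQ_imp_Suc)
    have "(\<lambda>n. S n / real n * (real n / real (Suc n))) \<longlonglongrightarrow> c * 1"
      using lim unfolding S_def by (intro tendsto_mult LIMSEQ_n_over_Suc_n)
    moreover have "S n / real n * (real n / real (Suc n)) = S (Suc n - 1) / real (Suc n)" for n
      by (cases "n = 0") (simp_all add: S_def birkhoff_sum_def)
    ultimately show "(\<lambda>n. S (Suc n - 1) / real (Suc n)) \<longlonglongrightarrow> c" by simp
  qed
  moreover have "(\<lambda>n. S (length \<beta> - 1) / real n) \<longlonglongrightarrow> 0"
    by (rule lim_const_over_n)
  ultimately have "(\<lambda>n. lam * (u (x (n - 1)) / real n)
      + lam * (S (n - 1) / real n - S (length \<beta> - 1) / real n)) \<longlonglongrightarrow> lam * 0 + lam * (c - 0)"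
    by (intro tendsto_intros)
  moreover have "\<forall>\<^sub>F n in sequentially. lam * (u (x (n - 1)) / real n)
      + lam * (S (n - 1) / real n - S (length \<beta> - 1) / real n)
      = lam_beta A lam u \<beta> (proj n x) / real n"
    unfolding eventually_sequentially
    using lam_beta_proj[OF \<open>\<beta> \<noteq> []\<close>]
    by (intro exI[of _ "Suc (length \<beta>)"])
      (auto simp: S_def add_divide_distrib diff_divide_distrib right_diff_distrib)
  ultimately show ?thesis
    by (simp add: Lim_transform_eventually)
qed

lemma borel_measurable_F_A:
  "inv_ergodic_borel N A \<tau> \<Longrightarrow> F_A A lam u \<in> borel_measurable \<tau>"
  using borel_measurable_two_coordinates[OF sets_inv_ergodic_borel,
      where G = "\<lambda>i j. u i * (1 - Pmat A lam u i j)"]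
  by (simp add: F_A_def[abs_def])

lemma AE_tendsto_lam_beta_proj:
  assumes "zero_one_matrix N A" "PF_data N A lam u" "1 < lam"
    and "\<beta> \<noteq> []" "inv_ergodic_borel N A \<tau>"
  shows "AE x in \<tau>. (\<lambda>n. lam_beta A lam u \<beta> (proj n x) / real n)
    \<longlonglongrightarrow> lam * integral\<^sup>L \<tau> (F_A A lam u)"
proof -
  interpret ergodic_mpt \<tau> shift
    using assms(5) by (rule inv_ergodic_borel_ergodic_mpt)
  have "AE x in \<tau>. (\<lambda>n. birkhoff_sum shift (F_A A lam u) n x / real n)
      \<longlonglongrightarrow> integral\<^sup>L \<tau> (F_A A lam u)"
    using assms abs_F_A_le_1 borel_measurable_F_A space_inv_ergodic_borel[OF assms(5)]
    by (intro birkhoff_ergodic[where K = 1]) auto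
  with AE_space show ?thesis
  proof eventually_elim
    case (elim x)
    then have "x i \<in> {1..N}" for i
      using space_inv_ergodic_borel[OF assms(5)] by (auto simp: Omega_def)
    then have "\<bar>u (x i)\<bar> \<le> 1" for i
      using PF_eigenvector_bounds[OF assms(1-3)] by (simp add: abs_le_iff less_imp_le)
    with elim(2) show ?case
      by (rule tendsto_lam_beta_proj[OF \<open>\<beta> \<noteq> []\<close>])
  qed
qed

lemma integrable_first_letter:
  assumes "zero_one_matrix N A" "PF_data N A lam u" "1 < lam" "inv_ergodic_borel N A \<tau>"
  shows "integrable \<tau> (\<lambda>x. u (x 0))"
proof -
  interpret prob_space \<tau>
    using assms(4) by (simp add: inv_ergodic_borel_def borel_prob_on_Omega_def)
  show ?thesis
    using borel_measurable_two_coordinates[OF sets_inv_ergodic_borel[OF assms(4)],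
        where G = "\<lambda>i j. u i"]
      PF_eigenvector_bounds[OF assms(1-3)] space_inv_ergodic_borel[OF assms(4)]
    by (intro integrable_const_bound[where B = 1]) (auto simp: Omega_def less_imp_le)
qed

lemma integral_F_A:
  assumes "zero_one_matrix N A" "PF_data N A lam u" "1 < lam" "inv_ergodic_borel N A \<tau>"
  shows "integral\<^sup>L \<tau> (F_A A lam u) = (1 - 1 / lam) * (\<integral>x. u (x 0) \<partial>\<tau>)"
proof -
  interpret ergodic_mpt \<tau> shift
    using assms(4) by (rule inv_ergodic_borel_ergodic_mpt)
  note space = space_inv_ergodic_borel[OF assms(4)]
  note u = PF_eigenvector_bounds[OF assms(1-3)]
  note int_U = integrable_first_letter[OF assms]
  have "integral\<^sup>L \<tau> (F_A A lam u) = (\<integral>x. u (x 0) - u ((shift ^^ 1) x 0) / lam \<partial>\<tau>)"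
    using F_A_on_Omega[of N u lam] u(1) space \<open>1 < lam\<close>
    by (intro Bochner_Integration.integral_cong) (auto simp: shift_def)
  also have "\<dots> = (\<integral>x. u (x 0) \<partial>\<tau>) - (\<integral>x. u ((shift ^^ 1) x 0) \<partial>\<tau>) / lam"
    using int_U integrable_comp_funpow[OF int_U, of 1] by simp
  also have "\<dots> = (1 - 1 / lam) * (\<integral>x. u (x 0) \<partial>\<tau>)"
    using integral_comp_funpow[OF borel_measurable_integrable[OF int_U], of 1]
    by (simp add: algebra_simps)
  finally show ?thesis .
qed

lemma integral_first_letter_bounds:
  assumes "zero_one_matrix N A" "PF_data N A lam u" "1 < lam" "inv_ergodic_borel N A \<tau>"
  shows "Min (u ` {1..N}) \<le> (\<integral>x. u (x 0) \<partial>\<tau>)" "(\<integral>x. u (x 0) \<partial>\<tau>) \<le> 1 / lam"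
proof -
  interpret prob_space \<tau>
    using assms(4) by (simp add: inv_ergodic_borel_def borel_prob_on_Omega_def)
  note space = space_inv_ergodic_borel[OF assms(4)]
  note u = PF_eigenvector_bounds[OF assms(1-3)]
  note int_U = integrable_first_letter[OF assms]
  have "(\<integral>x. Min (u ` {1..N}) \<partial>\<tau>) \<le> (\<integral>x. u (x 0) \<partial>\<tau>)"
    using int_U space by (intro integral_mono) (auto simp: Omega_def)
  then show "Min (u ` {1..N}) \<le> (\<integral>x. u (x 0) \<partial>\<tau>)" by (simp add: prob_space)
  have "(\<integral>x. u (x 0) \<partial>\<tau>) \<le> (\<integral>x. 1 / lam \<partial>\<tau>)"
    using int_U space u(2) by (intro integral_mono) (auto simp: Omega_def)
  then show "(\<integral>x. u (x 0) \<partial>\<tau>) \<le> 1 / lam" by (simp add: prob_space)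
qed

lemma integral_F_A_bounds:
  assumes "zero_one_matrix N A" "PF_data N A lam u" "1 < lam" "inv_ergodic_borel N A \<tau>"
  shows "(1 - 1 / lam) * Min (u ` {1..N}) \<le> integral\<^sup>L \<tau> (F_A A lam u)"
    and "integral\<^sup>L \<tau> (F_A A lam u) \<le> (1 - 1 / lam) / lam"
proof -
  note bounds = integral_first_letter_bounds[OF assms]
  have "0 < 1 - 1 / lam" using \<open>1 < lam\<close> by simp
  then show "(1 - 1 / lam) * Min (u ` {1..N}) \<le> integral\<^sup>L \<tau> (F_A A lam u)"
      "integral\<^sup>L \<tau> (F_A A lam u) \<le> (1 - 1 / lam) / lam"
    using bounds mult_left_mono[OF bounds(2), of "1 - 1 / lam"]
    by (simp_all add: integral_F_A[OF assms])
qed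

lemma Min_PF_eigenvector_bounds:
  assumes "zero_one_matrix N A" "PF_data N A lam u" "1 < lam"
  shows "0 < Min (u ` {1..N})" "Min (u ` {1..N}) \<le> 1"
proof -
  have "(\<Sum>i\<in>{1..N}. u i) = 1" using assms(2) by (simp add: PF_data_def)
  then obtain i where i: "i \<in> {1..N}" by (metis all_not_in_conv sum.empty zero_neq_one)
  show "0 < Min (u ` {1..N})"
    using i PF_eigenvector_bounds(1)[OF assms] by (subst Min_gr_iff) auto
  have "Min (u ` {1..N}) \<le> u i" using i by (intro Min_le) auto
  also have "u i \<le> 1" using PF_eigenvector_bounds(3)[OF assms i] .
  finally show "Min (u ` {1..N}) \<le> 1" .
qed

theorem theorem3p1:
  fixes N :: nat and A :: "nat \<Rightarrow> nat \<Rightarrow> real" and lam :: real and u :: "nat \<Rightarrow> real"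
  assumes "zero_one_matrix N A" and "primitive N A"
    and "PF_data N A lam u" and "lam > 1"
  shows "(\<forall>\<beta> \<tau>. admissible N A \<beta> \<and> \<beta> \<noteq> [] \<and> inv_ergodic_borel N A \<tau> \<longrightarrow>
           (AE x in \<tau>. x \<in> cyl N A \<beta> \<longrightarrow>
              (\<lambda>n. lam_beta A lam u \<beta> (proj n x) / real n)
                \<longlonglongrightarrow> lam * integral\<^sup>L \<tau> (F_A A lam u)))
       \<and> (\<exists>c0 c1 :: real. 0 < c0 \<and> c0 \<le> c1 \<and> c1 < 1 \<and>
           (\<forall>\<tau>. inv_ergodic_borel N A \<tau> \<longrightarrow>
              c0 \<le> integral\<^sup>L \<tau> (F_A A lam u) \<and> integral\<^sup>L \<tau> (F_A A lam u) \<le> c1 / lam))"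
proof -
  note PF = assms(1,3,4)
  define c1 where "c1 = 1 - 1 / lam"
  define c0 where "c0 = c1 * Min (u ` {1..N})"
  have "0 < c1" "c1 < 1" using \<open>lam > 1\<close> by (simp_all add: c1_def)
  moreover note Min_PF_eigenvector_bounds[OF PF]
  ultimately have "0 < c0" "c0 \<le> c1" by (simp_all add: c0_def mult_left_le)
  moreover have "c0 \<le> integral\<^sup>L \<tau> (F_A A lam u) \<and> integral\<^sup>L \<tau> (F_A A lam u) \<le> c1 / lam"
    if "inv_ergodic_borel N A \<tau>" for \<tau>
    using integral_F_A_bounds[OF PF that] by (simp add: c0_def c1_def)
  moreover have "AE x in \<tau>. x \<in> cyl N A \<beta> \<longrightarrow>
      (\<lambda>n. lam_beta A lam u \<beta> (proj n x) / real n) \<longlonglongrightarrow> lam * integral\<^sup>L \<tau> (F_A A lam u)"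
    if "\<beta> \<noteq> []" "inv_ergodic_borel N A \<tau>" for \<beta> \<tau>
    using AE_tendsto_lam_beta_proj[OF PF that] by (rule eventually_mono) simp
  ultimately show ?thesis using \<open>c1 < 1\<close> by blast
qed

end
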